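(* Let $d\ge1$, $\kappa>0$, and let $X_1,\dots,X_n$ be independent random vectors in $\mathbb{R}^d$, $X_i=(X_{i,j})_{j=1}^d$, with $\mathbb{E}X_i=0$ and $\|X_i\|_\infty\le\kappa$ almost surely. Let $\Gamma\ge\max_{1\le j\le d}\sum_{i=1}^n\mathrm{Var}(X_{i,j})$ and $S_n:=\sum_{i=1}^nX_i$. For $L>0$ let $\mathrm{e}(L):=\exp(1/L)-1-1/L$. Then for every $L>0$, $$\sqrt{\mathbb{E}\|S_n\|_\infty^2}\le \kappa L\log(2d)+\frac{\Gamma L\,\mathrm{e}(L)}{\kappa}.$$
   Context: $\|x\|_\infty:=\max_{1\le j\le d}|x_j|$; $\log$ is the natural logarithm. *)

theory Defs
  imports "HOL-Probability.Probability"
begin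

definition sup_norm :: "real ^ 'd \<Rightarrow> real" where
  "sup_norm x = Max (range (\<lambda>j. \<bar>x $ j\<bar>))"

definition e_fun :: "real \<Rightarrow> real" where
  "e_fun L = exp (1 / L) - 1 - 1 / L"

end

theory Submission
  imports Defs
begin

(*
  Write S = X_1 + ... + X_n, d = CARD('d), l = 1/(kappa L) and
  Z = sum_j (exp (l S_j) + exp (-l S_j)), so that l |S|_inf <= ln Z.

  1. Real analysis: Bennett's pointwise bound exp u <= 1 + u + u^2 (e^a-1-a)/a^2
     for u <= a, and concavity of (ln z)^2 on [e, oo) in tangent-line form.
  2. Probability: Bennett's bound on the moment generating function of a sum of
     independent bounded centred real variables; summed over the 2d signed
     coordinate sums it gives E Z <= 2d exp (Gamma e(L) / kappa^2).
  3. Jensen's inequality for (ln z)^2: since Z >= 2d >= e when d >= 2,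
     E (l |S|_inf)^2 <= E (ln Z)^2 <= (ln (2d exp (Gamma e(L)/kappa^2)))^2,
     which is the claim after taking square roots.
  4. For d = 1 the second moment of S is at most Gamma, and AM-GM shows that
     sqrt Gamma is below the claimed bound.
  The coordinate form of the hypotheses is packaged as coordinatewise_bounded;
  the theorem only translates the vector hypotheses into it.
*)

section \<open>Elementary inequalities for exp and ln\<close>

lemma exp_le_quad_nonpos:
  fixes u :: real assumes "u \<le> 0"
  shows "exp u \<le> 1 + u + u\<^sup>2 / 2"
proof -
  let ?f = "\<lambda>x::real. 1 + x + x\<^sup>2 / 2 - exp x"
  have "?f 0 \<le> ?f u"
  proof (rule DERIV_nonpos_imp_nonincreasing[OF assms])
    fix x :: real
    show "\<exists>y. DERIV ?f x :> y \<and> y \<le> 0"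
      by (rule exI[of _ "1 + x - exp x"])
        (auto intro!: derivative_eq_intros)
  qed
  then show ?thesis by simp
qed

lemma exp_ge_quad_nonneg:
  fixes a :: real assumes "0 \<le> a"
  shows "a\<^sup>2 / 2 \<le> exp a - 1 - a"
proof -
  let ?f = "\<lambda>x::real. exp x - 1 - x - x\<^sup>2 / 2"
  have "?f 0 \<le> ?f a"
  proof (rule DERIV_nonneg_imp_nondecreasing[OF assms])
    fix x :: real
    have "DERIV ?f x :> exp x - 1 - x" by (auto intro!: derivative_eq_intros)
    moreover have "exp x - 1 - x \<ge> 0" using exp_ge_add_one_self[of x] by linarith
    ultimately show "\<exists>y. DERIV ?f x :> y \<and> y \<ge> 0" by blast
  qed
  then show ?thesis by simp
qed

text \<open>The remainder \<open>(exp u - 1 - u) / u\<^sup>2\<close> is increasing on \<open>[0, a]\<close>;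
  proved termwise on the exponential series.\<close>
lemma exp_remainder_mono:
  fixes a u :: real assumes "0 < a" "0 \<le> u" "u \<le> a"
  shows "exp u - 1 - u \<le> u\<^sup>2 / a\<^sup>2 * (exp a - 1 - a)"
proof -
  define T where "T x = (\<lambda>n. inverse (fact (n + 2)) * (x::real) ^ (n + 2))" for x
  have remainder: "exp x - 1 - x = suminf (T x)" for x
    using exp_first_two_terms[of x] by (simp add: T_def)
  have summable: "summable (T x)" for x
    using summable_ignore_initial_segment[OF summable_exp_generic[of x], of 2]
    by (simp add: T_def)
  have "suminf (T u) \<le> suminf (\<lambda>n. u\<^sup>2 / a\<^sup>2 * T a n)"
  proof (rule suminf_le)
    fix n
    have "u ^ n \<le> a ^ n" using assms by (simp add: power_mono)
    then have "u\<^sup>2 * u ^ n \<le> u\<^sup>2 * a ^ n" by (simp add: mult_left_mono)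
    moreover have "u\<^sup>2 / a\<^sup>2 * a ^ (n+2) = u\<^sup>2 * a ^ n"
      using assms by (simp add: power_add field_simps power2_eq_square)
    moreover have "u ^ (n+2) = u\<^sup>2 * u ^ n" by (simp add: power_add power2_eq_square)
    ultimately have "u ^ (n+2) \<le> u\<^sup>2 / a\<^sup>2 * a ^ (n+2)" by linarith
    then have "inverse (fact (n+2)) * u ^ (n+2) \<le> inverse (fact (n+2)) * (u\<^sup>2 / a\<^sup>2 * a ^ (n+2))"
      by (rule mult_left_mono) simp
    then show "T u n \<le> u\<^sup>2 / a\<^sup>2 * T a n"
      unfolding T_def by (metis mult.left_commute)
  qed (auto intro: summable summable_mult)
  also have "\<dots> = u\<^sup>2 / a\<^sup>2 * suminf (T a)"
    by (rule suminf_mult[OF summable])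
  finally show ?thesis by (simp add: remainder)
qed

lemma bennett_exp_bound:
  fixes a u :: real assumes "0 < a" "u \<le> a"
  shows "exp u \<le> 1 + u + u\<^sup>2 * ((exp a - 1 - a) / a\<^sup>2)"
proof (cases "u \<le> 0")
  case True
  have "1/2 \<le> (exp a - 1 - a) / a\<^sup>2"
    using exp_ge_quad_nonneg[of a] assms by (simp add: field_simps)
  then have "u\<^sup>2 / 2 \<le> u\<^sup>2 * ((exp a - 1 - a) / a\<^sup>2)"
    by (metis mult_left_mono times_divide_eq_right mult_1_right zero_le_power2)
  with exp_le_quad_nonpos[OF True] show ?thesis by linarith
next
  case False
  with exp_remainder_mono[of a u] assms show ?thesis by (simp add: field_simps)
qed

text \<open>\<open>(ln z)\<^sup>2\<close> is concave on \<open>[e, \<infinity>)\<close>: it lies below each of its tangents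
  there.  This is the Jensen step for the log-sum-exp majorant.\<close>
lemma ln_squared_below_tangent:
  fixes A z :: real assumes "exp 1 \<le> A" "exp 1 \<le> z"
  shows "(ln z)\<^sup>2 \<le> (ln A)\<^sup>2 + 2 * ln A / A * (z - A)"
proof -
  have pos: "A > 0" "z > 0" using assms exp_gt_zero[of 1] by linarith+
  have der: "DERIV (\<lambda>x. (ln x)\<^sup>2) x :> 2 * ln x / x" if "x > 0" for x :: real
    using that by (auto intro!: derivative_eq_intros simp: field_simps power2_eq_square)
  consider "z < A" | "z = A" | "A < z" by linarith
  then show ?thesis
  proof cases
    case 1
    obtain w where w: "z < w" "w < A" "(ln A)\<^sup>2 - (ln z)\<^sup>2 = (A - z) * (2 * ln w / w)"
      using MVT2[OF 1, of "\<lambda>x. (ln x)\<^sup>2" "\<lambda>x. 2 * ln x / x"] der pos by force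
    have "ln A / A \<le> ln w / w" using ln_x_over_x_mono[of w A] w assms by linarith
    then have slope: "(A - z) * (2 * ln A / A) \<le> (A - z) * (2 * ln w / w)"
      using 1 by (intro mult_left_mono) auto
    have "(ln z)\<^sup>2 = (ln A)\<^sup>2 - (A - z) * (2 * ln w / w)" using w by linarith
    also have "\<dots> \<le> (ln A)\<^sup>2 - (A - z) * (2 * ln A / A)" using slope by linarith
    also have "\<dots> = (ln A)\<^sup>2 + 2 * ln A / A * (z - A)" by algebra
    finally show ?thesis .
  next
    case 2 then show ?thesis by simp
  next
    case 3
    obtain w where w: "A < w" "w < z" "(ln z)\<^sup>2 - (ln A)\<^sup>2 = (z - A) * (2 * ln w / w)"
      using MVT2[OF 3, of "\<lambda>x. (ln x)\<^sup>2" "\<lambda>x. 2 * ln x / x"] der pos by force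
    have "ln w / w \<le> ln A / A" using ln_x_over_x_mono[of A w] w assms by linarith
    then have slope: "(z - A) * (2 * ln w / w) \<le> (z - A) * (2 * ln A / A)"
      using 3 by (intro mult_left_mono) auto
    have "(ln z)\<^sup>2 = (ln A)\<^sup>2 + (z - A) * (2 * ln w / w)" using w by linarith
    also have "\<dots> \<le> (ln A)\<^sup>2 + (z - A) * (2 * ln A / A)" using slope by linarith
    also have "\<dots> = (ln A)\<^sup>2 + 2 * ln A / A * (z - A)" by algebra
    finally show ?thesis .
  qed
qed

text \<open>\<open>2 cosh t \<ge> 2\<close>; gives the lower bound \<open>2d\<close> for the log-sum-exp majorant.\<close>
lemma exp_plus_exp_neg_ge_2: "2 \<le> exp (t::real) + exp (- t)"
  using exp_ge_add_one_self[of t] exp_ge_add_one_self[of "-t"] by linarith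

text \<open>The bound of the theorem dominates \<open>sqrt \<Gamma>\<close> (AM-GM, using
  \<open>ln 2 \<ge> 1/2\<close> and \<open>L\<^sup>2 e(L) \<ge> 1/2\<close>); this settles dimension one.\<close>
lemma sqrt_le_bound_dim_one:
  fixes \<kappa> L \<Gamma> :: real assumes "\<kappa> > 0" "L > 0" "\<Gamma> \<ge> 0"
  shows "sqrt \<Gamma> \<le> \<kappa> * L * ln 2 + \<Gamma> * L * e_fun L / \<kappa>"
proof -
  define a where "a = \<kappa> * L * ln 2"
  define b where "b = \<Gamma> * L * e_fun L / \<kappa>"
  have e: "(1/L)\<^sup>2 / 2 \<le> e_fun L"
    unfolding e_fun_def using exp_ge_quad_nonneg[of "1/L"] assms by simp
  then have e2: "1/2 \<le> L\<^sup>2 * e_fun L"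
    using assms by (simp add: field_simps power2_eq_square)
  have ln2: "1/2 \<le> ln (2::real)" using ln2_ge_two_thirds by linarith
  have a0: "a \<ge> 0" using assms ln2 by (simp add: a_def)
  have "0 \<le> e_fun L" using e zero_le_power2[of "1/L"] by linarith
  then have b0: "b \<ge> 0" using assms by (simp add: b_def)
  have "4 * a * b = 4 * ln 2 * \<Gamma> * (L\<^sup>2 * e_fun L)"
    using assms by (simp add: a_def b_def field_simps power2_eq_square)
  also have "\<dots> \<ge> 4 * (1/2) * \<Gamma> * (1/2)"
    using ln2 e2 assms by (intro mult_mono) auto
  finally have "\<Gamma> \<le> 4 * a * b" by simp
  also have "4 * a * b \<le> (a + b)\<^sup>2"
    using zero_le_power2[of "a - b"] by (simp add: power2_eq_square algebra_simps)
  finally have "\<Gamma> \<le> (a + b)\<^sup>2" .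
  then have "sqrt \<Gamma> \<le> sqrt ((a + b)\<^sup>2)" by (rule real_sqrt_le_mono)
  also have "\<dots> = a + b" using a0 b0 by simp
  finally show ?thesis unfolding a_def b_def .
qed

section \<open>The maximum norm\<close>

lemma sup_norm_ge: "\<bar>x $ j\<bar> \<le> sup_norm (x :: real ^ 'd)"
  unfolding sup_norm_def by (rule Max_ge) auto

lemma sup_norm_nonneg: "0 \<le> sup_norm (x :: real ^ 'd)"
  using order_trans[OF abs_ge_zero sup_norm_ge] .

lemma sup_norm_attained: "\<exists>j. sup_norm (x :: real ^ 'd) = \<bar>x $ j\<bar>"
proof -
  have "sup_norm x \<in> range (\<lambda>j. \<bar>x $ j\<bar>)"
    unfolding sup_norm_def by (rule Max_in) auto
  then show ?thesis by auto
qed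

lemma norm_le_card_sup_norm: "norm (x :: real ^ 'd) \<le> real CARD('d) * sup_norm x"
proof -
  have "(\<Sum>j\<in>UNIV. \<bar>x $ j\<bar>) \<le> (\<Sum>j\<in>(UNIV::'d set). sup_norm x)"
    by (intro sum_mono sup_norm_ge)
  then show ?thesis using norm_le_l1_cart[of x] by simp
qed

lemma sup_norm_le_log_sum_exp:
  fixes x :: "real ^ 'd" and l :: real assumes "0 \<le> l"
  shows "l * sup_norm x \<le> ln (\<Sum>j\<in>UNIV. exp (l * x $ j) + exp (- (l * x $ j)))"
proof -
  obtain j where j: "sup_norm x = \<bar>x $ j\<bar>" using sup_norm_attained by blast
  have "exp (l * sup_norm x) \<le> exp (l * x $ j) + exp (- (l * x $ j))"
    using j assms by (cases "x $ j \<ge> 0") (simp_all add: add_increasing2 add_increasing)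
  also have "\<dots> \<le> (\<Sum>j\<in>UNIV. exp (l * x $ j) + exp (- (l * x $ j)))"
    by (rule member_le_sum) (auto intro: add_nonneg_nonneg)
  finally show ?thesis by (simp add: ln_ge_iff add_pos_pos sum_pos)
qed

section \<open>Moment bounds for sums of independent bounded variables\<close>

context prob_space
begin

lemma integrable_exp_scaled_bounded:
  fixes Y :: "'a \<Rightarrow> real"
  assumes [measurable]: "Y \<in> borel_measurable M" and "AE \<omega> in M. \<bar>Y \<omega>\<bar> \<le> \<kappa>" and "l > 0"
  shows "integrable M (\<lambda>\<omega>. exp (l * Y \<omega>))"
proof (rule integrable_const_bound[where B="exp (l * \<kappa>)"])
  show "AE \<omega> in M. norm (exp (l * Y \<omega>)) \<le> exp (l * \<kappa>)"
    using assms(2) by eventually_elim (use assms(3) in auto)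
qed simp

text \<open>Bennett's bound for a single centred variable bounded by \<open>\<kappa>\<close>: integrate the
  pointwise quadratic bound and use \<open>1 + x \<le> exp x\<close>.\<close>
lemma bennett_mgf_single:
  fixes Y :: "'a \<Rightarrow> real"
  assumes [measurable]: "Y \<in> borel_measurable M"
    and bnd: "AE \<omega> in M. \<bar>Y \<omega>\<bar> \<le> \<kappa>" and mean: "expectation Y = 0"
    and k: "\<kappa> > 0" and l: "l > 0"
  shows "expectation (\<lambda>\<omega>. exp (l * Y \<omega>))
     \<le> exp ((exp (l * \<kappa>) - 1 - l * \<kappa>) / \<kappa>\<^sup>2 * expectation (\<lambda>\<omega>. (Y \<omega>)\<^sup>2))"
proof -
  define c where "c = (exp (l * \<kappa>) - 1 - l * \<kappa>) / \<kappa>\<^sup>2"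
  have intY: "integrable M Y"
    by (rule integrable_const_bound[where B=\<kappa>]) (use bnd in auto)
  have intY2: "integrable M (\<lambda>\<omega>. (Y \<omega>)\<^sup>2)"
  proof (rule integrable_const_bound[where B="\<kappa>\<^sup>2"])
    show "AE \<omega> in M. norm ((Y \<omega>)\<^sup>2) \<le> \<kappa>\<^sup>2"
      using bnd
    proof eventually_elim
      case (elim \<omega>)
      then have "\<bar>Y \<omega>\<bar>\<^sup>2 \<le> \<kappa>\<^sup>2" by (intro power_mono) auto
      then show ?case by simp
    qed
  qed simp
  have "AE \<omega> in M. exp (l * Y \<omega>) \<le> 1 + l * Y \<omega> + c * (Y \<omega>)\<^sup>2"
    using bnd
  proof eventually_elim
    case (elim \<omega>)
    have "l * Y \<omega> \<le> l * \<kappa>" using elim l by (intro mult_left_mono) auto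
    from bennett_exp_bound[OF _ this] k l
    have "exp (l * Y \<omega>) \<le> 1 + l * Y \<omega>
        + (l * Y \<omega>)\<^sup>2 * ((exp (l * \<kappa>) - 1 - l * \<kappa>) / (l * \<kappa>)\<^sup>2)"
      by simp
    also have "(l * Y \<omega>)\<^sup>2 * ((exp (l * \<kappa>) - 1 - l * \<kappa>) / (l * \<kappa>)\<^sup>2) = c * (Y \<omega>)\<^sup>2"
      using k l by (simp add: c_def field_simps power2_eq_square)
    finally show ?case .
  qed
  then have "expectation (\<lambda>\<omega>. exp (l * Y \<omega>)) \<le> expectation (\<lambda>\<omega>. 1 + l * Y \<omega> + c * (Y \<omega>)\<^sup>2)"
    using integrable_exp_scaled_bounded[OF _ bnd l] intY intY2 by (intro integral_mono_AE) auto
  also have "\<dots> = 1 + c * expectation (\<lambda>\<omega>. (Y \<omega>)\<^sup>2)"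
    using intY intY2 mean by (simp add: prob_space)
  also have "\<dots> \<le> exp (c * expectation (\<lambda>\<omega>. (Y \<omega>)\<^sup>2))"
    by (rule exp_ge_add_one_self[simplified add.commute])
  finally show ?thesis unfolding c_def .
qed

text \<open>Bennett's bound on the moment generating function of a sum of independent,
  centred variables bounded by \<open>\<kappa>\<close>: by independence it factors over the summands.\<close>
lemma bennett_mgf_bound:
  fixes Y :: "nat \<Rightarrow> 'a \<Rightarrow> real" and I :: "nat set"
  assumes fin: "finite I" and ind: "indep_vars (\<lambda>_. borel) Y I"
    and bnd: "\<And>i. i \<in> I \<Longrightarrow> AE \<omega> in M. \<bar>Y i \<omega>\<bar> \<le> \<kappa>"
    and mean: "\<And>i. i \<in> I \<Longrightarrow> expectation (Y i) = 0"
    and k: "\<kappa> > 0" and l: "l > 0"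
  shows "integrable M (\<lambda>\<omega>. exp (l * (\<Sum>i\<in>I. Y i \<omega>)))"
    and "expectation (\<lambda>\<omega>. exp (l * (\<Sum>i\<in>I. Y i \<omega>)))
     \<le> exp ((exp (l * \<kappa>) - 1 - l * \<kappa>) / \<kappa>\<^sup>2 * (\<Sum>i\<in>I. expectation (\<lambda>\<omega>. (Y i \<omega>)\<^sup>2)))"
proof -
  define c where "c = (exp (l * \<kappa>) - 1 - l * \<kappa>) / \<kappa>\<^sup>2"
  have [measurable]: "Y i \<in> borel_measurable M" if "i \<in> I" for i
    using ind that unfolding indep_vars_def by auto
  have intE: "integrable M (\<lambda>\<omega>. exp (l * Y i \<omega>))" if "i \<in> I" for i
    using integrable_exp_scaled_bounded[OF _ bnd l] that by simp
  have indE: "indep_vars (\<lambda>_. borel) (\<lambda>i \<omega>. exp (l * Y i \<omega>)) I"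
    by (rule indep_vars_compose2[OF ind]) auto
  have prod: "(\<lambda>\<omega>. exp (l * (\<Sum>i\<in>I. Y i \<omega>))) = (\<lambda>\<omega>. \<Prod>i\<in>I. exp (l * Y i \<omega>))"
    by (simp add: sum_distrib_left exp_sum fin)
  show "integrable M (\<lambda>\<omega>. exp (l * (\<Sum>i\<in>I. Y i \<omega>)))"
    unfolding prod by (rule indep_vars_integrable[OF fin indE intE])
  have "expectation (\<lambda>\<omega>. exp (l * (\<Sum>i\<in>I. Y i \<omega>)))
      = (\<Prod>i\<in>I. expectation (\<lambda>\<omega>. exp (l * Y i \<omega>)))"
    unfolding prod by (rule indep_vars_lebesgue_integral[OF fin indE intE])
  also have "\<dots> \<le> (\<Prod>i\<in>I. exp (c * expectation (\<lambda>\<omega>. (Y i \<omega>)\<^sup>2)))"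
    unfolding c_def
    by (intro prod_mono conjI bennett_mgf_single bnd mean k l integral_nonneg_AE) auto
  also have "\<dots> = exp (c * (\<Sum>i\<in>I. expectation (\<lambda>\<omega>. (Y i \<omega>)\<^sup>2)))"
    by (simp add: exp_sum fin sum_distrib_left)
  finally show "expectation (\<lambda>\<omega>. exp (l * (\<Sum>i\<in>I. Y i \<omega>)))
      \<le> exp ((exp (l * \<kappa>) - 1 - l * \<kappa>) / \<kappa>\<^sup>2 * (\<Sum>i\<in>I. expectation (\<lambda>\<omega>. (Y i \<omega>)\<^sup>2)))"
    unfolding c_def .
qed

text \<open>For independent centred bounded variables the second moment of the sum is
  the sum of the second moments (the cross terms vanish).\<close>
lemma second_moment_indep_sum:
  fixes Y :: "nat \<Rightarrow> 'a \<Rightarrow> real" and I :: "nat set"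
  assumes fin: "finite I" and ind: "indep_vars (\<lambda>_. borel) Y I"
    and bnd: "\<And>i. i \<in> I \<Longrightarrow> AE \<omega> in M. \<bar>Y i \<omega>\<bar> \<le> \<kappa>"
    and mean: "\<And>i. i \<in> I \<Longrightarrow> expectation (Y i) = 0"
  shows "expectation (\<lambda>\<omega>. (\<Sum>i\<in>I. Y i \<omega>)\<^sup>2) = (\<Sum>i\<in>I. expectation (\<lambda>\<omega>. (Y i \<omega>)\<^sup>2))"
proof -
  have [measurable]: "Y i \<in> borel_measurable M" if "i \<in> I" for i
    using ind that unfolding indep_vars_def by auto
  have intY: "integrable M (Y i)" if "i \<in> I" for i
    by (rule integrable_const_bound[where B=\<kappa>]) (use bnd[OF that] that in auto)
  have intP: "integrable M (\<lambda>\<omega>. Y i \<omega> * Y k \<omega>)" if "i \<in> I" "k \<in> I" for i k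
  proof (rule integrable_const_bound[where B="\<kappa> * \<kappa>"])
    show "AE x in M. norm (Y i x * Y k x) \<le> \<kappa> * \<kappa>"
      using bnd[OF that(1)] bnd[OF that(2)]
      by eventually_elim (auto simp: abs_mult intro: mult_mono)
  qed (use that in auto)
  have cross: "expectation (\<lambda>\<omega>. Y i \<omega> * Y k \<omega>)
      = (if i = k then expectation (\<lambda>\<omega>. (Y i \<omega>)\<^sup>2) else 0)" if "i \<in> I" "k \<in> I" for i k
  proof (cases "i = k")
    case True then show ?thesis by (simp add: power2_eq_square)
  next
    case False
    have "indep_vars (\<lambda>_. borel) Y {i, k}"
      by (rule indep_vars_subset[OF ind]) (use that in auto)
    then have "expectation (\<lambda>\<omega>. \<Prod>l\<in>{i,k}. Y l \<omega>) = (\<Prod>l\<in>{i,k}. expectation (Y l))"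
      by (rule indep_vars_lebesgue_integral[rotated]) (use that intY in auto)
    then show ?thesis using False mean that by simp
  qed
  have "expectation (\<lambda>\<omega>. (\<Sum>i\<in>I. Y i \<omega>)\<^sup>2)
      = expectation (\<lambda>\<omega>. \<Sum>i\<in>I. \<Sum>k\<in>I. Y i \<omega> * Y k \<omega>)"
    by (simp add: power2_eq_square sum_product)
  also have "\<dots> = (\<Sum>i\<in>I. \<Sum>k\<in>I. expectation (\<lambda>\<omega>. Y i \<omega> * Y k \<omega>))"
    using intP by (simp add: Bochner_Integration.integral_sum)
  also have "\<dots> = (\<Sum>i\<in>I. expectation (\<lambda>\<omega>. (Y i \<omega>)\<^sup>2))"
    using fin by (simp add: cross cong: sum.cong)
  finally show ?thesis .
qed

text \<open>Jensen's inequality for the function \<open>(ln z)\<^sup>2\<close>, concave on \<open>[e, \<infinity>)\<close>: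
  anything below \<open>(ln Z)\<^sup>2\<close> has mean at most \<open>(ln A)\<^sup>2\<close> when \<open>E Z \<le> A\<close>.\<close>
lemma expectation_le_ln_squared:
  fixes Z W :: "'a \<Rightarrow> real"
  assumes Z: "integrable M Z" "\<And>\<omega>. exp 1 \<le> Z \<omega>" and EZ: "expectation Z \<le> A"
    and A: "exp 1 \<le> A"
    and W: "\<And>\<omega>. W \<omega> \<le> (ln (Z \<omega>))\<^sup>2"
  shows "expectation W \<le> (ln A)\<^sup>2"
proof -
  define s where "s = 2 * ln A / A"
  have s: "0 \<le> s"
    using A exp_ge_add_one_self[of 1] unfolding s_def by (intro divide_nonneg_pos) auto
  have tangent: "(ln (Z \<omega>))\<^sup>2 \<le> (ln A)\<^sup>2 + s * (Z \<omega> - A)" for \<omega>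
    using ln_squared_below_tangent[OF A Z(2)] unfolding s_def .
  have "expectation W \<le> expectation (\<lambda>\<omega>. (ln A)\<^sup>2 + s * (Z \<omega> - A))"
  proof (rule integral_mono_AE')
    show "AE \<omega> in M. W \<omega> \<le> (ln A)\<^sup>2 + s * (Z \<omega> - A)"
      using W tangent by (blast intro: order_trans)
    show "AE \<omega> in M. 0 \<le> (ln A)\<^sup>2 + s * (Z \<omega> - A)"
      using tangent by (blast intro: order_trans[OF zero_le_power2])
  qed (use Z in auto)
  also have "\<dots> = (ln A)\<^sup>2 + s * (expectation Z - A)"
    using Z by (simp add: prob_space)
  also have "\<dots> \<le> (ln A)\<^sup>2"
    using EZ s by (simp add: mult_nonneg_nonpos)
  finally show ?thesis .
qed

section \<open>The maximal inequality in coordinate form\<close>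

definition coordinatewise_bounded :: "nat set \<Rightarrow> (nat \<Rightarrow> 'a \<Rightarrow> real ^ 'd) \<Rightarrow> real \<Rightarrow> real \<Rightarrow> bool"
  where "coordinatewise_bounded I X \<kappa> \<Gamma> \<longleftrightarrow>
    (\<forall>j. indep_vars (\<lambda>_. borel) (\<lambda>i \<omega>. X i \<omega> $ j) I) \<and>
    (\<forall>i\<in>I. \<forall>j. (AE \<omega> in M. \<bar>X i \<omega> $ j\<bar> \<le> \<kappa>) \<and> expectation (\<lambda>\<omega>. X i \<omega> $ j) = 0) \<and>
    (\<forall>j. (\<Sum>i\<in>I. expectation (\<lambda>\<omega>. (X i \<omega> $ j)\<^sup>2)) \<le> \<Gamma>)"

text \<open>Summing Bennett's bound over the \<open>2d\<close> signed coordinate sums bounds the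
  mean of the log-sum-exp majorant.\<close>
lemma log_sum_exp_moment:
  fixes X :: "nat \<Rightarrow> 'a \<Rightarrow> real ^ 'd"
  assumes fin: "finite I" and hyp: "coordinatewise_bounded I X \<kappa> \<Gamma>"
    and k: "\<kappa> > 0" and l: "l > 0"
  defines "Z \<equiv> \<lambda>\<omega>. \<Sum>j\<in>UNIV. exp (l * (\<Sum>i\<in>I. X i \<omega>) $ j) + exp (- (l * (\<Sum>i\<in>I. X i \<omega>) $ j))"
    and "c \<equiv> (exp (l * \<kappa>) - 1 - l * \<kappa>) / \<kappa>\<^sup>2"
  shows "integrable M Z" and "expectation Z \<le> 2 * CARD('d) * exp (c * \<Gamma>)"
proof -
  have "0 \<le> exp (l * \<kappa>) - 1 - l * \<kappa>" using exp_ge_add_one_self[of "l * \<kappa>"] by linarith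
  then have c: "0 \<le> c" unfolding c_def by simp
  have one_sign: "integrable M (\<lambda>\<omega>. exp (l * (\<Sum>i\<in>I. \<sigma> * X i \<omega> $ j)))
      \<and> expectation (\<lambda>\<omega>. exp (l * (\<Sum>i\<in>I. \<sigma> * X i \<omega> $ j))) \<le> exp (c * \<Gamma>)"
    if "\<sigma> \<in> {1, -1}" for \<sigma> :: real and j
  proof -
    have "indep_vars (\<lambda>_. borel) (\<lambda>i \<omega>. X i \<omega> $ j) I"
      using hyp unfolding coordinatewise_bounded_def by blast
    from indep_vars_compose2[OF this, where Y="\<lambda>i x. \<sigma> * x" and N="\<lambda>_. borel"]
    have ind: "indep_vars (\<lambda>_. borel) (\<lambda>i \<omega>. \<sigma> * X i \<omega> $ j) I" by simp
    have sq: "(\<sigma> * X i \<omega> $ j)\<^sup>2 = (X i \<omega> $ j)\<^sup>2" for i \<omega>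
      using that by (auto simp: power2_eq_square)
    note bennett = bennett_mgf_bound[OF fin ind _ _ k l]
    have "expectation (\<lambda>\<omega>. exp (l * (\<Sum>i\<in>I. \<sigma> * X i \<omega> $ j)))
        \<le> exp (c * (\<Sum>i\<in>I. expectation (\<lambda>\<omega>. (X i \<omega> $ j)\<^sup>2)))"
      using bennett(2) hyp that unfolding c_def sq coordinatewise_bounded_def by (auto simp: abs_mult)
    also have "\<dots> \<le> exp (c * \<Gamma>)"
      using hyp c unfolding coordinatewise_bounded_def by (simp add: mult_left_mono)
    finally show ?thesis
      using bennett(1) hyp that unfolding coordinatewise_bounded_def by (auto simp: abs_mult)
  qed
  have pos: "integrable M (\<lambda>\<omega>. exp (l * (\<Sum>i\<in>I. X i \<omega> $ j)))
      \<and> expectation (\<lambda>\<omega>. exp (l * (\<Sum>i\<in>I. X i \<omega> $ j))) \<le> exp (c * \<Gamma>)" for j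
    using one_sign[of 1 j] by simp
  have neg: "integrable M (\<lambda>\<omega>. exp (- (l * (\<Sum>i\<in>I. X i \<omega> $ j))))
      \<and> expectation (\<lambda>\<omega>. exp (- (l * (\<Sum>i\<in>I. X i \<omega> $ j)))) \<le> exp (c * \<Gamma>)" for j
    using one_sign[of "-1" j] by (simp add: sum_negf)
  show "integrable M Z"
    unfolding Z_def using pos neg by simp
  have "expectation Z = (\<Sum>j\<in>UNIV. expectation (\<lambda>\<omega>. exp (l * (\<Sum>i\<in>I. X i \<omega> $ j)))
                                  + expectation (\<lambda>\<omega>. exp (- (l * (\<Sum>i\<in>I. X i \<omega> $ j)))))"
    unfolding Z_def using pos neg by (simp add: Bochner_Integration.integral_sum)
  also have "\<dots> \<le> (\<Sum>j\<in>(UNIV::'d set). exp (c * \<Gamma>) + exp (c * \<Gamma>))"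
    using pos neg by (intro sum_mono add_mono) auto
  finally show "expectation Z \<le> 2 * CARD('d) * exp (c * \<Gamma>)" by simp
qed

text \<open>Dimension at least two: the log-sum-exp majorant is at least \<open>2d \<ge> e\<close>,
  so Jensen's step applies to \<open>(l |S|\<^sub>\<infinity>)\<^sup>2 \<le> (ln Z)\<^sup>2\<close> with \<open>l = 1/(\<kappa> L)\<close>.\<close>
lemma max_norm_bound_high_dim:
  fixes X :: "nat \<Rightarrow> 'a \<Rightarrow> real ^ 'd"
  assumes fin: "finite I" and hyp: "coordinatewise_bounded I X \<kappa> \<Gamma>"
    and k: "\<kappa> > 0" and L: "L > 0" and G: "\<Gamma> \<ge> 0" and d: "CARD('d) \<ge> 2"
  shows "sqrt (expectation (\<lambda>\<omega>. (sup_norm (\<Sum>i\<in>I. X i \<omega>))\<^sup>2))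
           \<le> \<kappa> * L * ln (2 * real CARD('d)) + \<Gamma> * L * e_fun L / \<kappa>"
proof -
  define l where "l = 1 / (\<kappa> * L)"
  have l: "l > 0" "l * \<kappa> = 1 / L" using k L by (simp_all add: l_def)
  define Z where "Z \<omega> = (\<Sum>j\<in>UNIV. exp (l * (\<Sum>i\<in>I. X i \<omega>) $ j) + exp (- (l * (\<Sum>i\<in>I. X i \<omega>) $ j)))" for \<omega>
  define A where "A = 2 * real CARD('d) * exp (e_fun L / \<kappa>\<^sup>2 * \<Gamma>)"
  note moment = log_sum_exp_moment[OF fin hyp k l(1), folded Z_def, unfolded l(2)]
  have four: "(4::real) \<le> 2 * real CARD('d)" using d by simp
  have e4: "exp 1 \<le> (4::real)" using exp_bound[of 1] by simp
  have "(\<Sum>j\<in>(UNIV::'d set). 2) \<le> Z \<omega>" for \<omega>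
    unfolding Z_def by (intro sum_mono exp_plus_exp_neg_ge_2)
  then have "2 * real CARD('d) \<le> Z \<omega>" for \<omega> by (simp add: mult.commute)
  then have Z: "exp 1 \<le> Z \<omega>" for \<omega> using four e4 by (meson order_trans)
  have "0 \<le> e_fun L" using exp_ge_add_one_self[of "1/L"] unfolding e_fun_def by linarith
  then have "0 \<le> e_fun L / \<kappa>\<^sup>2 * \<Gamma>" using G by simp
  then have "4 * 1 \<le> A" unfolding A_def using four by (intro mult_mono) auto
  then have A: "exp 1 \<le> A" using e4 by linarith
  have "expectation (\<lambda>\<omega>. (l * sup_norm (\<Sum>i\<in>I. X i \<omega>))\<^sup>2) \<le> (ln A)\<^sup>2"
  proof (rule expectation_le_ln_squared[OF moment(1) Z _ A])
    show "expectation Z \<le> A" using moment(2) by (simp add: A_def e_fun_def)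
    show "(l * sup_norm (\<Sum>i\<in>I. X i \<omega>))\<^sup>2 \<le> (ln (Z \<omega>))\<^sup>2" for \<omega>
    proof (rule power_mono)
      show "0 \<le> l * sup_norm (\<Sum>i\<in>I. X i \<omega>)"
        using l(1) by (intro mult_nonneg_nonneg sup_norm_nonneg) simp
    qed (use sup_norm_le_log_sum_exp[of l "\<Sum>i\<in>I. X i \<omega>"] l in \<open>simp add: Z_def\<close>)
  qed
  then have "expectation (\<lambda>\<omega>. (sup_norm (\<Sum>i\<in>I. X i \<omega>))\<^sup>2) \<le> (ln A / l)\<^sup>2"
    using l(1) by (simp add: power_mult_distrib power_divide pos_le_divide_eq mult.commute)
  then have "sqrt (expectation (\<lambda>\<omega>. (sup_norm (\<Sum>i\<in>I. X i \<omega>))\<^sup>2)) \<le> \<bar>ln A / l\<bar>"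
    using real_sqrt_le_mono by fastforce
  also have "\<bar>ln A / l\<bar> = ln A * (\<kappa> * L)"
    using A exp_ge_add_one_self[of 1] l(1) by (simp add: l_def)
  also have "\<dots> = (ln (2 * real CARD('d)) + e_fun L / \<kappa>\<^sup>2 * \<Gamma>) * (\<kappa> * L)"
    using d by (simp add: A_def ln_mult)
  also have "\<dots> = \<kappa> * L * ln (2 * real CARD('d)) + \<Gamma> * L * e_fun L / \<kappa>"
    using k by (simp add: field_simps power2_eq_square)
  finally show ?thesis .
qed

lemma max_norm_bound_dim_one:
  fixes X :: "nat \<Rightarrow> 'a \<Rightarrow> real ^ 'd"
  assumes fin: "finite I" and hyp: "coordinatewise_bounded I X \<kappa> \<Gamma>"
    and k: "\<kappa> > 0" and L: "L > 0" and G: "\<Gamma> \<ge> 0" and d: "CARD('d) = 1"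
  shows "sqrt (expectation (\<lambda>\<omega>. (sup_norm (\<Sum>i\<in>I. X i \<omega>))\<^sup>2))
           \<le> \<kappa> * L * ln (2 * real CARD('d)) + \<Gamma> * L * e_fun L / \<kappa>"
proof -
  obtain j :: 'd where "(UNIV :: 'd set) = {j}" using d by (rule card_1_singletonE)
  then have sup_norm_eq: "sup_norm x = \<bar>x $ j\<bar>" for x :: "real ^ 'd"
    using sup_norm_attained[of x] by (metis (full_types) UNIV_I singletonD)
  have "expectation (\<lambda>\<omega>. (sup_norm (\<Sum>i\<in>I. X i \<omega>))\<^sup>2)
      = expectation (\<lambda>\<omega>. (\<Sum>i\<in>I. X i \<omega> $ j)\<^sup>2)"
    by (simp add: sup_norm_eq)
  also have "\<dots> = (\<Sum>i\<in>I. expectation (\<lambda>\<omega>. (X i \<omega> $ j)\<^sup>2))"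
    using hyp fin unfolding coordinatewise_bounded_def by (intro second_moment_indep_sum) auto
  also have "\<dots> \<le> \<Gamma>" using hyp unfolding coordinatewise_bounded_def by blast
  finally have "sqrt (expectation (\<lambda>\<omega>. (sup_norm (\<Sum>i\<in>I. X i \<omega>))\<^sup>2)) \<le> sqrt \<Gamma>"
    by (rule real_sqrt_le_mono)
  also have "\<dots> \<le> \<kappa> * L * ln (2 * real CARD('d)) + \<Gamma> * L * e_fun L / \<kappa>"
    using sqrt_le_bound_dim_one[OF k L G] d by simp
  finally show ?thesis .
qed

lemma expectation_component_zero:
  fixes V :: "'a \<Rightarrow> real ^ 'd"
  assumes [measurable]: "V \<in> borel_measurable M" and "AE \<omega> in M. sup_norm (V \<omega>) \<le> \<kappa>"
    and "expectation V = 0"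
  shows "expectation (\<lambda>\<omega>. V \<omega> $ j) = 0"
proof -
  have "integrable M V"
  proof (rule integrable_const_bound[where B="real CARD('d) * \<kappa>"])
    show "AE \<omega> in M. norm (V \<omega>) \<le> real CARD('d) * \<kappa>"
      using assms(2) by eventually_elim
        (meson norm_le_card_sup_norm mult_left_mono of_nat_0_le_iff order_trans)
  qed simp
  then have "expectation (\<lambda>\<omega>. V \<omega> \<bullet> axis j 1) = expectation V \<bullet> axis j 1" by simp
  then show ?thesis using assms(3) by (simp add: cart_eq_inner_axis)
qed

lemma coordinatewise_bounded_if_vector_bounded:
  fixes X :: "nat \<Rightarrow> 'a \<Rightarrow> real ^ 'd"
  assumes ind: "indep_vars (\<lambda>_. borel) X I"
    and meas: "\<And>i. i \<in> I \<Longrightarrow> X i \<in> borel_measurable M"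
    and mean: "\<And>i. i \<in> I \<Longrightarrow> expectation (X i) = 0"
    and bnd: "\<And>i. i \<in> I \<Longrightarrow> AE \<omega> in M. sup_norm (X i \<omega>) \<le> \<kappa>"
    and var: "Max (range (\<lambda>j. \<Sum>i\<in>I. variance (\<lambda>\<omega>. X i \<omega> $ j))) \<le> \<Gamma>"
  shows "coordinatewise_bounded I X \<kappa> \<Gamma>"
proof -
  have mean_j: "expectation (\<lambda>\<omega>. X i \<omega> $ j) = 0" if "i \<in> I" for i j
    using expectation_component_zero meas mean bnd that by blast
  have var_j: "(\<Sum>i\<in>I. expectation (\<lambda>\<omega>. (X i \<omega> $ j)\<^sup>2)) \<le> \<Gamma>" for j
  proof -
    have "(\<Sum>i\<in>I. variance (\<lambda>\<omega>. X i \<omega> $ j)) \<le> Max (range (\<lambda>j. \<Sum>i\<in>I. variance (\<lambda>\<omega>. X i \<omega> $ j)))"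
      by (rule Max_ge) auto
    moreover have "(\<Sum>i\<in>I. variance (\<lambda>\<omega>. X i \<omega> $ j)) = (\<Sum>i\<in>I. expectation (\<lambda>\<omega>. (X i \<omega> $ j)\<^sup>2))"
      by (intro sum.cong refl) (simp add: mean_j)
    ultimately show ?thesis using var by linarith
  qed
  have bnd_j: "AE \<omega> in M. \<bar>X i \<omega> $ j\<bar> \<le> \<kappa>" if "i \<in> I" for i j
    using bnd[OF that] by eventually_elim (rule order_trans[OF sup_norm_ge])
  have ind_j: "indep_vars (\<lambda>_. borel) (\<lambda>i \<omega>. X i \<omega> $ j) I" for j
    using indep_vars_compose2[OF ind, where Y="\<lambda>i x. x $ j" and N="\<lambda>_. borel"] by simp
  show ?thesis
    unfolding coordinatewise_bounded_def using ind_j bnd_j mean_j var_j by blast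
qed

lemma max_norm_bound:
  fixes X :: "nat \<Rightarrow> 'a \<Rightarrow> real ^ 'd"
  assumes fin: "finite I" and hyp: "coordinatewise_bounded I X \<kappa> \<Gamma>"
    and k: "\<kappa> > 0" and L: "L > 0"
  shows "sqrt (expectation (\<lambda>\<omega>. (sup_norm (\<Sum>i\<in>I. X i \<omega>))\<^sup>2))
           \<le> \<kappa> * L * ln (2 * real CARD('d)) + \<Gamma> * L * e_fun L / \<kappa>"
proof -
  have "0 \<le> (\<Sum>i\<in>I. expectation (\<lambda>\<omega>. (X i \<omega> $ j)\<^sup>2))" for j
    by (intro sum_nonneg integral_nonneg_AE) auto
  then have G: "\<Gamma> \<ge> 0" using hyp unfolding coordinatewise_bounded_def by (meson order_trans)
  have "CARD('d) \<ge> 1" by (simp add: Suc_le_eq)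
  then consider "CARD('d) = 1" | "CARD('d) \<ge> 2" by linarith
  then show ?thesis
  proof cases
    case 1 show ?thesis by (rule max_norm_bound_dim_one[OF fin hyp k L G 1])
  next
    case 2 show ?thesis by (rule max_norm_bound_high_dim[OF fin hyp k L G 2])
  qed
qed

end

theorem lemma7:
  fixes M :: "'a measure" and X :: "nat \<Rightarrow> 'a \<Rightarrow> real ^ 'd"
    and n :: nat and \<kappa> \<Gamma> L :: real
  assumes "prob_space M"
    and "\<kappa> > 0"
    and "prob_space.indep_vars M (\<lambda>_. borel) X {1..n}"
    and "\<And>i. i \<in> {1..n} \<Longrightarrow> X i \<in> borel_measurable M"
    and "\<And>i. i \<in> {1..n} \<Longrightarrow> prob_space.expectation M (X i) = 0"
    and "\<And>i. i \<in> {1..n} \<Longrightarrow> (AE \<omega> in M. sup_norm (X i \<omega>) \<le> \<kappa>)"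
    and "Max (range (\<lambda>j. \<Sum>i\<in>{1..n}. prob_space.variance M (\<lambda>\<omega>. X i \<omega> $ j))) \<le> \<Gamma>"
    and "L > 0"
  shows "sqrt (prob_space.expectation M (\<lambda>\<omega>. (sup_norm (\<Sum>i\<in>{1..n}. X i \<omega>))\<^sup>2))
           \<le> \<kappa> * L * ln (2 * real CARD('d)) + \<Gamma> * L * e_fun L / \<kappa>"
proof -
  interpret prob_space M by (rule assms(1))
  have "coordinatewise_bounded {1..n} X \<kappa> \<Gamma>"
    by (rule coordinatewise_bounded_if_vector_bounded) (use assms(3-7) in auto)
  from max_norm_bound[OF _ this assms(2,8)] show ?thesis by simp
qed

end
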